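(* Let $G$ be a connected graph which is not a tree. If the length of the longest cycle in $G$ is at most $4$, then $G$ has no good vertex.
   Context: All graphs are finite, simple, undirected. For a connected graph $G$, the Wiener index is $W(G)=\sum_{\{u,v\}\subseteq V(G)} \mathrm{dist}_G(u,v)$, the sum over unordered pairs of distinct vertices; the Wiener index of a disconnected graph is defined to be $\infty$. A vertex $v$ of a connected graph $G$ is good if $W(G)=W(G-v)$, where $G-v$ is obtained by deleting $v$ and its incident edges. *)

theory Defs
  imports Main "HOL-Library.Extended_Nat"
begin

definition simple_graph :: "'a set \<Rightarrow> 'a set set \<Rightarrow> bool" where
  "simple_graph V E \<longleftrightarrow> finite V \<and>
     (\<forall>e\<in>E. \<exists>u v. e = {u, v} \<and> u \<in> V \<and> v \<in> V \<and> u \<noteq> v)"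

text \<open>A walk given as its vertex sequence; its length is the number of edges.\<close>
definition is_walk :: "'a set \<Rightarrow> 'a set set \<Rightarrow> 'a list \<Rightarrow> bool" where
  "is_walk V E xs \<longleftrightarrow> xs \<noteq> [] \<and> set xs \<subseteq> V \<and>
     (\<forall>i. Suc i < length xs \<longrightarrow> {xs ! i, xs ! Suc i} \<in> E)"

definition connected_graph :: "'a set \<Rightarrow> 'a set set \<Rightarrow> bool" where
  "connected_graph V E \<longleftrightarrow> V \<noteq> {} \<and>
     (\<forall>u\<in>V. \<forall>v\<in>V. \<exists>xs. is_walk V E xs \<and> hd xs = u \<and> last xs = v)"

definition dist :: "'a set \<Rightarrow> 'a set set \<Rightarrow> 'a \<Rightarrow> 'a \<Rightarrow> nat" where
  "dist V E u v = (LEAST n. \<exists>xs. is_walk V E xs \<and> hd xs = u \<and> last xs = v \<and> length xs = Suc n)"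

definition wiener :: "'a set \<Rightarrow> 'a set set \<Rightarrow> enat" where
  "wiener V E = (if connected_graph V E
      then enat ((\<Sum>u\<in>V. \<Sum>v\<in>V. dist V E u v) div 2) else \<infinity>)"

definition del_vertex_V :: "'a set \<Rightarrow> 'a \<Rightarrow> 'a set" where
  "del_vertex_V V v = V - {v}"

definition del_vertex_E :: "'a set set \<Rightarrow> 'a \<Rightarrow> 'a set set" where
  "del_vertex_E E v = {e \<in> E. v \<notin> e}"

definition good_vertex :: "'a set \<Rightarrow> 'a set set \<Rightarrow> 'a \<Rightarrow> bool" where
  "good_vertex V E v \<longleftrightarrow> v \<in> V \<and>
     wiener V E = wiener (del_vertex_V V v) (del_vertex_E E v)"

text \<open>A cycle of length k = length xs \<ge> 3: distinct vertices, consecutive ones adjacent,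
  and the last adjacent to the first.\<close>
definition is_cycle :: "'a set \<Rightarrow> 'a set set \<Rightarrow> 'a list \<Rightarrow> bool" where
  "is_cycle V E xs \<longleftrightarrow> length xs \<ge> 3 \<and> distinct xs \<and> is_walk V E xs \<and>
     {last xs, hd xs} \<in> E"

definition is_tree :: "'a set \<Rightarrow> 'a set set \<Rightarrow> bool" where
  "is_tree V E \<longleftrightarrow> connected_graph V E \<and> \<not> (\<exists>xs. is_cycle V E xs)"

end

theory Submission
  imports Defs
begin

text \<open>If \<open>G - v\<close> is disconnected, its Wiener index is infinite. Otherwise deleting \<open>v\<close>
  changes no distance between the remaining vertices: a shortest path through \<open>v\<close> passes
  \<open>a, v, b\<close>, and a shortest \<open>a\<close>-\<open>b\<close> path in \<open>G - v\<close> closes up with \<open>v\<close> to a cycle, so it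
  has at most two edges and can replace \<open>a, v, b\<close>. Hence \<open>W(G - v)\<close> misses exactly the
  positive distances from \<open>v\<close>, and \<open>v\<close> is not good.\<close>

lemma is_walk_Nil [simp]: "\<not> is_walk V E []"
  by (simp add: is_walk_def)

lemma is_walk_singleton [simp]: "is_walk V E [x] \<longleftrightarrow> x \<in> V"
  by (simp add: is_walk_def)

lemma is_walk_Cons_Cons [simp]:
  "is_walk V E (x # y # xs) \<longleftrightarrow> x \<in> V \<and> {x, y} \<in> E \<and> is_walk V E (y # xs)"
  unfolding is_walk_def by (auto simp: less_Suc_eq_0_disj)

lemma is_walk_ConsD: "is_walk V E (x # xs) \<Longrightarrow> x \<in> V"
  by (simp add: is_walk_def)

lemma is_walk_subset: "is_walk V E xs \<Longrightarrow> set xs \<subseteq> V"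
  by (simp add: is_walk_def)

lemma is_walk_mono: "is_walk V E xs \<Longrightarrow> V \<subseteq> V' \<Longrightarrow> E \<subseteq> E' \<Longrightarrow> is_walk V' E' xs"
  by (induction xs rule: induct_list012) auto

lemma is_walk_del_vertex:
  "is_walk V E xs \<Longrightarrow> v \<notin> set xs \<Longrightarrow> is_walk (V - {v}) (del_vertex_E E v) xs"
  by (induction xs rule: induct_list012) (auto simp: del_vertex_E_def)

lemma is_walk_of_del_vertex: "is_walk (V - {v}) (del_vertex_E E v) xs \<Longrightarrow> is_walk V E xs"
  by (erule is_walk_mono) (auto simp: del_vertex_E_def)

lemma is_walk_appendD1: "is_walk V E (xs @ ys) \<Longrightarrow> xs \<noteq> [] \<Longrightarrow> is_walk V E xs"
  by (induction xs rule: induct_list012) (auto simp: neq_Nil_conv dest: is_walk_ConsD)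

lemma is_walk_appendD2: "is_walk V E (xs @ ys) \<Longrightarrow> ys \<noteq> [] \<Longrightarrow> is_walk V E ys"
  by (induction xs rule: induct_list012) (auto simp: neq_Nil_conv Cons_eq_append_conv)

lemma is_walk_append_Cons_edge: "is_walk V E (xs @ y # ys) \<Longrightarrow> xs \<noteq> [] \<Longrightarrow> {last xs, y} \<in> E"
  by (induction xs rule: induct_list012) auto

lemma is_walk_append_tl:
  "is_walk V E xs \<Longrightarrow> is_walk V E ys \<Longrightarrow> last xs = hd ys \<Longrightarrow> is_walk V E (xs @ tl ys)"
proof (induction xs rule: induct_list012)
  case (2 x)
  then show ?case by (cases ys) auto
qed auto

lemma last_append_tl: "xs \<noteq> [] \<Longrightarrow> last xs = hd ys \<Longrightarrow> ys \<noteq> [] \<Longrightarrow> last (xs @ tl ys) = last ys"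
  by (cases ys) auto

lemma is_walk_remove_cycles:
  assumes "is_walk V E xs"
  shows "\<exists>ys. is_walk V E ys \<and> distinct ys \<and> hd ys = hd xs \<and> last ys = last xs
    \<and> length ys \<le> length xs"
  using assms
proof (induction "length xs" arbitrary: xs rule: less_induct)
  case less
  show ?case
  proof (cases "distinct xs")
    case False
    then obtain as y bs cs where xs: "xs = as @ [y] @ bs @ [y] @ cs"
      using not_distinct_decomp by blast
    have "is_walk V E ((as @ [y]) @ tl (y # cs))"
      using less.prems xs is_walk_appendD1[of V E "as @ [y]"] is_walk_appendD2[of V E "as @ [y] @ bs"]
      by (intro is_walk_append_tl) auto
    moreover have "hd (as @ [y] @ cs) = hd xs" "last (as @ [y] @ cs) = last xs"
      using xs by (simp_all add: hd_append)
    ultimately show ?thesis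
      using less.hyps[of "as @ [y] @ cs"] xs by fastforce
  qed (use less.prems in blast)
qed

lemma simple_graph_no_loop: "simple_graph V E \<Longrightarrow> {x} \<notin> E"
  unfolding simple_graph_def by (metis doubleton_eq_iff insert_absorb2)

lemma simple_graph_edge_subset: "simple_graph V E \<Longrightarrow> e \<in> E \<Longrightarrow> e \<subseteq> V"
  unfolding simple_graph_def by fastforce

lemma dist_le_length:
  assumes "is_walk V E xs"
  shows "dist V E (hd xs) (last xs) < length xs"
proof -
  from assms obtain x xs' where xs: "xs = x # xs'"
    by (cases xs) auto
  have "dist V E (hd xs) (last xs) \<le> length xs'"
    unfolding dist_def by (rule Least_le) (use assms xs in auto)
  with xs show ?thesis
    by simp
qed

lemma dist_walk_exists:
  assumes "connected_graph V E" "u \<in> V" "w \<in> V"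
  obtains xs where "is_walk V E xs" "hd xs = u" "last xs = w" "length xs = Suc (dist V E u w)"
proof -
  obtain xs where "is_walk V E xs" "hd xs = u" "last xs = w"
    using assms unfolding connected_graph_def by blast
  moreover from \<open>is_walk V E xs\<close> have "length xs = Suc (length xs - 1)"
    by (cases xs) auto
  ultimately have "\<exists>n xs. is_walk V E xs \<and> hd xs = u \<and> last xs = w \<and> length xs = Suc n"
    by blast
  then have "\<exists>xs. is_walk V E xs \<and> hd xs = u \<and> last xs = w \<and> length xs = Suc (dist V E u w)"
    unfolding dist_def by (rule LeastI_ex)
  with that show thesis
    by blast
qed

lemma dist_pos:
  assumes "connected_graph V E" "u \<in> V" "w \<in> V" "u \<noteq> w"
  shows "0 < dist V E u w"
proof -
  obtain xs where "hd xs = u" "last xs = w" "length xs = Suc (dist V E u w)"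
    using dist_walk_exists[OF assms(1-3)] by blast
  with assms(4) show ?thesis
    by (cases xs) (auto simp: neq_Nil_conv)
qed

lemma bypass_of_length_two:
  assumes sg: "simple_graph V E"
    and cycles: "\<forall>xs. is_cycle V E xs \<longrightarrow> length xs \<le> 4"
    and conn': "connected_graph (V - {v}) (del_vertex_E E v)"
    and av: "{a, v} \<in> E" and vb: "{v, b} \<in> E"
  obtains ps where "is_walk (V - {v}) (del_vertex_E E v) ps" "hd ps = a" "last ps = b"
    "length ps \<le> 3"
proof -
  have "a \<noteq> v" "b \<noteq> v"
    using av vb simple_graph_no_loop[OF sg] by auto
  moreover have "a \<in> V" "b \<in> V" "v \<in> V"
    using av vb simple_graph_edge_subset[OF sg] by auto
  ultimately obtain ws where "is_walk (V - {v}) (del_vertex_E E v) ws" "hd ws = a" "last ws = b"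
    using conn' unfolding connected_graph_def by blast
  then obtain ps where ps: "is_walk (V - {v}) (del_vertex_E E v) ps" "distinct ps"
    "hd ps = a" "last ps = b"
    using is_walk_remove_cycles by metis
  have "length ps \<le> 3"
  proof (rule ccontr)
    assume long: "\<not> length ps \<le> 3"
    obtain ps' where ps': "ps = a # ps'"
      using ps(1,3) by (cases ps) auto
    have "v \<notin> set ps"
      using is_walk_subset[OF ps(1)] by blast
    moreover have "is_walk V E (v # ps)"
      using is_walk_of_del_vertex[OF ps(1)] \<open>v \<in> V\<close> av ps' by (simp add: insert_commute)
    moreover have "{last (v # ps), hd (v # ps)} \<in> E"
      using vb ps(4) ps' by (simp add: insert_commute)
    ultimately have "is_cycle V E (v # ps)"
      using long ps(2) unfolding is_cycle_def by simp
    with cycles long show False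
      by fastforce
  qed
  with ps that show thesis
    by blast
qed

lemma walk_avoiding_vertex:
  assumes sg: "simple_graph V E"
    and cycles: "\<forall>xs. is_cycle V E xs \<longrightarrow> length xs \<le> 4"
    and conn': "connected_graph (V - {v}) (del_vertex_E E v)"
    and xs: "is_walk V E xs" "distinct xs" "hd xs \<noteq> v" "last xs \<noteq> v"
  obtains ys where "is_walk (V - {v}) (del_vertex_E E v) ys" "hd ys = hd xs" "last ys = last xs"
    "length ys \<le> length xs"
proof (cases "v \<in> set xs")
  case False
  show thesis
    by (rule that[OF is_walk_del_vertex[OF xs(1) False]]) simp_all
next
  case True
  then obtain p q where xs_eq: "xs = p @ v # q"
    by (meson split_list)
  have "p \<noteq> []" "q \<noteq> []"
    using xs(3,4) xs_eq by auto
  have "v \<notin> set p" "v \<notin> set q"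
    using xs(2) xs_eq by auto
  have "is_walk V E p"
    using is_walk_appendD1[of V E p "v # q"] xs(1) xs_eq \<open>p \<noteq> []\<close> by simp
  moreover have "is_walk V E q"
    using is_walk_appendD2[of V E "p @ [v]" q] xs(1) xs_eq \<open>q \<noteq> []\<close> by simp
  ultimately have p': "is_walk (V - {v}) (del_vertex_E E v) p"
    and q': "is_walk (V - {v}) (del_vertex_E E v) q"
    using \<open>v \<notin> set p\<close> \<open>v \<notin> set q\<close> by (simp_all add: is_walk_del_vertex)
  have "{last p, v} \<in> E"
    using is_walk_append_Cons_edge[of V E p v q] xs(1) xs_eq \<open>p \<noteq> []\<close> by simp
  moreover have "{v, hd q} \<in> E"
    using is_walk_append_Cons_edge[of V E "p @ [v]" "hd q" "tl q"] xs(1) xs_eq \<open>q \<noteq> []\<close> by simp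
  ultimately obtain ps where ps: "is_walk (V - {v}) (del_vertex_E E v) ps" "hd ps = last p"
    "last ps = hd q" "length ps \<le> 3"
    by (rule bypass_of_length_two[OF sg cycles conn'])
  have "ps \<noteq> []"
    using ps(1) by auto
  let ?ys = "(p @ tl ps) @ tl q"
  have walk: "is_walk (V - {v}) (del_vertex_E E v) (p @ tl ps)"
    using is_walk_append_tl[OF p' ps(1)] ps(2) by simp
  have last: "last (p @ tl ps) = hd q"
    using last_append_tl[OF \<open>p \<noteq> []\<close> _ \<open>ps \<noteq> []\<close>] ps(2,3) by simp
  have "is_walk (V - {v}) (del_vertex_E E v) ?ys"
    using is_walk_append_tl[OF walk q' last] .
  moreover have "hd ?ys = hd xs"
    using xs_eq \<open>p \<noteq> []\<close> by simp
  moreover have "last ?ys = last xs"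
    using last_append_tl[OF _ last \<open>q \<noteq> []\<close>] \<open>p \<noteq> []\<close> \<open>q \<noteq> []\<close> xs_eq by simp
  moreover have "length ?ys \<le> length xs"
    using xs_eq ps(4) \<open>q \<noteq> []\<close> by (cases q) auto
  ultimately show thesis
    by (rule that)
qed

lemma dist_del_vertex_eq:
  assumes sg: "simple_graph V E"
    and cycles: "\<forall>xs. is_cycle V E xs \<longrightarrow> length xs \<le> 4"
    and conn: "connected_graph V E"
    and conn': "connected_graph (V - {v}) (del_vertex_E E v)"
    and u: "u \<in> V - {v}" and w: "w \<in> V - {v}"
  shows "dist (V - {v}) (del_vertex_E E v) u w = dist V E u w"
proof (rule antisym)
  obtain xs where xs: "is_walk V E xs" "hd xs = u" "last xs = w" "length xs = Suc (dist V E u w)"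
    using dist_walk_exists[OF conn] u w by blast
  then obtain ys where "is_walk V E ys" "distinct ys" "hd ys = u" "last ys = w"
    "length ys \<le> length xs"
    using is_walk_remove_cycles by metis
  then obtain zs where "is_walk (V - {v}) (del_vertex_E E v) zs" "hd zs = u" "last zs = w"
    "length zs \<le> length xs"
    using walk_avoiding_vertex[OF sg cycles conn'] u w by (metis DiffD2 insertI1 order.trans)
  then show "dist (V - {v}) (del_vertex_E E v) u w \<le> dist V E u w"
    using dist_le_length xs(4) by fastforce
next
  obtain xs where "is_walk (V - {v}) (del_vertex_E E v) xs" "hd xs = u" "last xs = w"
    "length xs = Suc (dist (V - {v}) (del_vertex_E E v) u w)"
    using dist_walk_exists[OF conn'] u w by blast
  then show "dist V E u w \<le> dist (V - {v}) (del_vertex_E E v) u w"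
    using dist_le_length[OF is_walk_of_del_vertex] by fastforce
qed

lemma half_double_sum_remove_less:
  fixes f :: "'a \<Rightarrow> 'a \<Rightarrow> nat"
  assumes "finite V" "u \<in> V" "v \<in> V" "u \<noteq> v" "0 < f u v" "0 < f v u"
  shows "(\<Sum>x\<in>V - {v}. \<Sum>y\<in>V - {v}. f x y) div 2 < (\<Sum>x\<in>V. \<Sum>y\<in>V. f x y) div 2"
proof -
  let ?A = "(V - {v}) \<times> (V - {v})"
  have "(\<Sum>x\<in>V - {v}. \<Sum>y\<in>V - {v}. f x y) + f u v + f v u
      = (\<Sum>(x, y)\<in>?A \<union> {(u, v), (v, u)}. f x y)"
    using assms(1,4) by (simp add: sum.union_disjoint sum.cartesian_product)
  also have "\<dots> \<le> (\<Sum>(x, y)\<in>V \<times> V. f x y)"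
    using assms(1-3) by (intro sum_mono2) auto
  also have "\<dots> = (\<Sum>x\<in>V. \<Sum>y\<in>V. f x y)"
    by (simp add: sum.cartesian_product)
  finally show ?thesis
    using assms(5,6) by linarith
qed

theorem theorem4:
  fixes V :: "'a set" and E :: "'a set set"
  assumes "simple_graph V E"
    and "connected_graph V E"
    and "\<not> is_tree V E"
    and "\<forall>xs. is_cycle V E xs \<longrightarrow> length xs \<le> 4"
  shows "\<not> (\<exists>v. good_vertex V E v)"
proof
  assume "\<exists>v. good_vertex V E v"
  then obtain v where v: "v \<in> V"
    and good: "wiener V E = wiener (V - {v}) (del_vertex_E E v)"
    unfolding good_vertex_def del_vertex_V_def by blast
  then have conn': "connected_graph (V - {v}) (del_vertex_E E v)"
    using assms(2) by (auto simp: wiener_def split: if_splits)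
  then obtain u where u: "u \<in> V - {v}"
    unfolding connected_graph_def by blast
  have "(\<Sum>x\<in>V - {v}. \<Sum>y\<in>V - {v}. dist (V - {v}) (del_vertex_E E v) x y)
      = (\<Sum>x\<in>V - {v}. \<Sum>y\<in>V - {v}. dist V E x y)"
    using dist_del_vertex_eq[OF assms(1,4,2) conn'] by simp
  moreover have "(\<Sum>x\<in>V - {v}. \<Sum>y\<in>V - {v}. dist V E x y) div 2
      < (\<Sum>x\<in>V. \<Sum>y\<in>V. dist V E x y) div 2"
    using assms(1) u v dist_pos[OF assms(2)]
    by (intro half_double_sum_remove_less[of V u v]) (auto simp: simple_graph_def)
  ultimately show False
    using good assms(2) conn' by (simp add: wiener_def)
qed

end
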